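(* Let $f(t)=\sum_{k=0}^n a_kt^k$ with $a_k\in\mathbb{H}$ be a left quaternion polynomial. Then $|J(f)(c)|\ge0$ for every $c\in\mathbb{H}$.
   Context: $\mathbb{H}$ is the real quaternion algebra, identified with $\mathbb{R}^4$ via $x+\mathbf{i}y+\mathbf{j}z+\mathbf{k}w\mapsto(x,y,z,w)$. A left polynomial $f(t)=\sum a_kt^k$ is evaluated at $c\in\mathbb{H}$ as $\sum a_kc^k$ and viewed as a map $\mathbb{R}^4\to\mathbb{R}^4$ via $f=f_1+\mathbf{i}f_2+\mathbf{j}f_3+\mathbf{k}f_4\mapsto(f_1,f_2,f_3,f_4)$; $J(f)(c)=[\partial f_i/\partial x_j](c)$ with $(x_1,\dots,x_4)=(x,y,z,w)$, and $|J(f)(c)|$ is its determinant. *)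

theory Defs
  imports "HOL-Analysis.Analysis"
begin

text \<open>The quaternions H are identified with real^4 via
  x + iy + jz + kw |-> (x,y,z,w), i.e. components 1,2,3,4 (index type 4).
  Quaternion multiplication in these coordinates:\<close>

definition hmult :: "real^4 \<Rightarrow> real^4 \<Rightarrow> real^4" where
  "hmult p q = (\<chi> i.
     if i = 1 then p$1*q$1 - p$2*q$2 - p$3*q$3 - p$4*q$4
     else if i = 2 then p$1*q$2 + p$2*q$1 + p$3*q$4 - p$4*q$3
     else if i = 3 then p$1*q$3 - p$2*q$4 + p$3*q$1 + p$4*q$2
     else p$1*q$4 + p$2*q$3 - p$3*q$2 + p$4*q$1)"

definition hone :: "real^4" where
  "hone = (\<chi> i. if i = 1 then 1 else 0)"

primrec hpow :: "real^4 \<Rightarrow> nat \<Rightarrow> real^4" where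
  "hpow c 0 = hone"
| "hpow c (Suc k) = hmult (hpow c k) c"

definition left_poly_eval :: "(nat \<Rightarrow> real^4) \<Rightarrow> nat \<Rightarrow> real^4 \<Rightarrow> real^4" where
  "left_poly_eval a n c = (\<Sum>k\<in>{0..n}. hmult (a k) (hpow c k))"

definition partial_deriv :: "(real^4 \<Rightarrow> real^4) \<Rightarrow> 4 \<Rightarrow> 4 \<Rightarrow> real^4 \<Rightarrow> real" where
  "partial_deriv F i j c = deriv (\<lambda>t. F (c + t *\<^sub>R axis j 1) $ i) 0"

definition jacobian :: "(real^4 \<Rightarrow> real^4) \<Rightarrow> real^4 \<Rightarrow> real^4^4" where
  "jacobian F c = (\<chi> i j. partial_deriv F i j c)"

end

theory Submission
  imports Defs
begin

text \<open>Let \<open>P\<close> be the orthogonal projection onto the slice \<open>span {1, Im c}\<close> and \<open>Q = id - P\<close>.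
  Elements of the slice commute with \<open>c\<close>, while \<open>q c = conj c q\<close> for \<open>q\<close> in the complement, so
  by the product rule the derivative of a left polynomial at \<open>c\<close> has the form
  \<open>h \<mapsto> U P h + V Q h\<close> (and is left multiplication by \<open>U\<close> if \<open>c\<close> is real). Left multiplication
  by \<open>U\<close> has determinant \<open>|U|\<^sup>4\<close>, so for \<open>U \<noteq> 0\<close> the derivative factors as
  \<open>L\<^sub>U \<circ> (P + L\<^sub>C Q)\<close>, and a direct computation gives
  \<open>det (P + L\<^sub>C Q) = (|Im c|\<^sup>2 C\<^sub>0\<^sup>2 + \<langle>Im C, Im c\<rangle>\<^sup>2) / |Im c|\<^sup>2 \<ge> 0\<close>.
  If \<open>U = 0\<close> the derivative vanishes on the real axis.\<close>

lemma hmult_add_left: "hmult (p + q) r = hmult p r + hmult q r"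
  by (simp add: hmult_def vec_eq_iff forall_4 algebra_simps)

lemma hmult_add_right: "hmult r (p + q) = hmult r p + hmult r q"
  by (simp add: hmult_def vec_eq_iff forall_4 algebra_simps)

lemma hmult_diff_right: "hmult r (p - q) = hmult r p - hmult r q"
  by (simp add: hmult_def vec_eq_iff forall_4 algebra_simps)

lemma hmult_assoc: "hmult (hmult p q) r = hmult p (hmult q r)"
  by (simp add: hmult_def vec_eq_iff forall_4 algebra_simps)

lemma hmult_zero_left [simp]: "hmult 0 p = 0"
  by (simp add: hmult_def vec_eq_iff forall_4)

lemma hmult_zero_right [simp]: "hmult p 0 = 0"
  by (simp add: hmult_def vec_eq_iff forall_4)

lemma hmult_hone_left [simp]: "hmult hone p = p"
  by (simp add: hmult_def hone_def vec_eq_iff forall_4)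

lemma bounded_bilinear_hmult: "bounded_bilinear hmult"
proof -
  have "bilinear hmult"
    unfolding bilinear_def
    by (auto intro!: linearI simp: hmult_def vec_eq_iff forall_4 algebra_simps)
  then show ?thesis
    by (simp add: bilinear_conv_bounded_bilinear)
qed

lemma bounded_linear_hmult_left: "bounded_linear (hmult p)"
  by (rule bounded_bilinear.bounded_linear_right[OF bounded_bilinear_hmult])

lemma linear_hmult_left: "linear (hmult p)"
  using bounded_linear_hmult_left by (rule bounded_linear.linear)

definition hconj :: "real^4 \<Rightarrow> real^4" where
  "hconj c = (\<chi> i. if i = 1 then c$1 else - c$i)"

definition himag :: "real^4 \<Rightarrow> real^4" where
  "himag c = (\<chi> i. if i = 1 then 0 else c$i)"

definition himag_norm2 :: "real^4 \<Rightarrow> real" where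
  "himag_norm2 c = c$2^2 + c$3^2 + c$4^2"

lemma hmult_right_inverse:
  assumes "p \<noteq> 0"
  obtains q where "hmult p q = hone"
proof
  define r where "r = p$1^2 + p$2^2 + p$3^2 + p$4^2"
  have "r \<noteq> 0"
    using assms by (auto simp: r_def vec_eq_iff forall_4 add_nonneg_eq_0_iff)
  have "hmult p (hconj p) = r *\<^sub>R hone"
    by (simp add: hmult_def hconj_def hone_def vec_eq_iff forall_4 r_def algebra_simps power2_eq_square)
  with \<open>r \<noteq> 0\<close> show "hmult p ((1 / r) *\<^sub>R hconj p) = hone"
    using linear_scale[OF linear_hmult_left] by simp
qed

lemma himag_norm2_eq_0: "himag_norm2 c = 0 \<longleftrightarrow> c$2 = 0 \<and> c$3 = 0 \<and> c$4 = 0"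
  by (auto simp: himag_norm2_def add_nonneg_eq_0_iff)

lemma himag_norm2_pos: "himag_norm2 c \<noteq> 0 \<Longrightarrow> himag_norm2 c > 0"
  by (simp add: himag_norm2_def order.not_eq_order_implies_strict)

lemma hconj_eq_self: "himag_norm2 c = 0 \<Longrightarrow> hconj c = c"
  by (simp add: himag_norm2_eq_0 hconj_def vec_eq_iff forall_4)

text \<open>Orthogonal projection onto the slice \<open>span {1, himag c}\<close>; for real \<open>c\<close> the division by
  zero makes it the projection onto the real axis.\<close>

definition slice_proj :: "real^4 \<Rightarrow> real^4 \<Rightarrow> real^4" where
  "slice_proj c h =
     (\<chi> i. if i = 1 then h$1 else (h$2 * c$2 + h$3 * c$3 + h$4 * c$4) / himag_norm2 c * c$i)"

definition slice_perp :: "real^4 \<Rightarrow> real^4 \<Rightarrow> real^4" where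
  "slice_perp c h = h - slice_proj c h"

lemma linear_slice_proj: "linear (slice_proj c)"
  by (rule linearI) (simp_all add: slice_proj_def vec_eq_iff forall_4 algebra_simps add_divide_distrib)

lemma linear_slice_perp: "linear (slice_perp c)"
  unfolding slice_perp_def by (intro linear_compose_sub linear_ident linear_slice_proj)

lemma slice_proj_commute: "hmult (slice_proj c h) c = hmult c (slice_proj c h)"
  by (simp add: hmult_def slice_proj_def vec_eq_iff forall_4 algebra_simps)

lemma slice_perp_conj_commute: "hmult (slice_perp c h) c = hmult (hconj c) (slice_perp c h)"
proof (cases "himag_norm2 c = 0")
  case True
  then show ?thesis
    by (simp add: himag_norm2_eq_0 hmult_def slice_perp_def slice_proj_def hconj_def vec_eq_iff forall_4)
next
  case False
  define t where "t = (h$2 * c$2 + h$3 * c$3 + h$4 * c$4) / himag_norm2 c"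
  have t: "t * (c$2^2 + c$3^2 + c$4^2) = h$2 * c$2 + h$3 * c$3 + h$4 * c$4"
    using False by (simp add: t_def himag_norm2_def)
  have "slice_perp c h = (\<chi> i. if i = 1 then 0 else h$i - t * c$i)"
    by (simp add: slice_perp_def slice_proj_def t_def vec_eq_iff forall_4)
  then show ?thesis
    by (simp add: hmult_def hconj_def vec_eq_iff forall_4 algebra_simps) (use t in algebra)
qed

lemma slice_proj_plus_perp: "slice_proj c h + slice_perp c h = h"
  by (simp add: slice_perp_def)

text \<open>For real \<open>c\<close> the splitting into slice and complement is not canonical, so there we
  require \<open>U = V\<close>, i.e. plain left multiplication.\<close>

definition slice_shaped :: "real^4 \<Rightarrow> (real^4 \<Rightarrow> real^4) \<Rightarrow> bool" where
  "slice_shaped c D \<longleftrightarrow> (\<exists>U V. D = (\<lambda>h. hmult U (slice_proj c h) + hmult V (slice_perp c h))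
                          \<and> (himag_norm2 c = 0 \<longrightarrow> U = V))"

lemma slice_shaped_add:
  assumes "slice_shaped c D" and "slice_shaped c E"
  shows "slice_shaped c (\<lambda>h. D h + E h)"
proof -
  obtain U V U' V' where
    "D = (\<lambda>h. hmult U (slice_proj c h) + hmult V (slice_perp c h))" "himag_norm2 c = 0 \<longrightarrow> U = V"
    "E = (\<lambda>h. hmult U' (slice_proj c h) + hmult V' (slice_perp c h))" "himag_norm2 c = 0 \<longrightarrow> U' = V'"
    using assms unfolding slice_shaped_def by blast
  then show ?thesis
    unfolding slice_shaped_def
    by (intro exI[of _ "U + U'"] exI[of _ "V + V'"]) (auto simp: hmult_add_left)
qed

lemma slice_shaped_mult_left:
  assumes "slice_shaped c D"
  shows "slice_shaped c (\<lambda>h. hmult b (D h))"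
proof -
  obtain U V where
    "D = (\<lambda>h. hmult U (slice_proj c h) + hmult V (slice_perp c h))" "himag_norm2 c = 0 \<longrightarrow> U = V"
    using assms unfolding slice_shaped_def by blast
  then show ?thesis
    unfolding slice_shaped_def
    by (intro exI[of _ "hmult b U"] exI[of _ "hmult b V"]) (auto simp: hmult_add_right hmult_assoc)
qed

text \<open>The product rule for \<open>hpow x k * x\<close> keeps the shape because right multiplication by \<open>c\<close>
  is left multiplication by \<open>c\<close> on the slice and by \<open>hconj c\<close> on its complement.\<close>

lemma slice_shaped_hpow_derivative:
  "\<exists>D. ((\<lambda>x. hpow x k) has_derivative D) (at c) \<and> slice_shaped c D"
proof (induction k)
  case 0
  have "slice_shaped c (\<lambda>h. 0)"
    unfolding slice_shaped_def by (intro exI[of _ 0]) (simp add: fun_eq_iff)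
  then show ?case
    by (auto intro: has_derivative_const)
next
  case (Suc k)
  then obtain D U V where D: "((\<lambda>x. hpow x k) has_derivative D) (at c)"
    and D_eq: "D = (\<lambda>h. hmult U (slice_proj c h) + hmult V (slice_perp c h))"
    and UV: "himag_norm2 c = 0 \<longrightarrow> U = V"
    unfolding slice_shaped_def by blast
  let ?D' = "\<lambda>h. hmult (hpow c k) h + hmult (D h) c"
  define U' where "U' = hpow c k + hmult U c"
  define V' where "V' = hpow c k + hmult V (hconj c)"
  have "((\<lambda>x. hmult (hpow x k) x) has_derivative ?D') (at c)"
    using bounded_bilinear.FDERIV[OF bounded_bilinear_hmult D has_derivative_ident] by simp
  moreover have "?D' = (\<lambda>h. hmult U' (slice_proj c h) + hmult V' (slice_perp c h))"
  proof
    fix h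
    have "?D' h = hmult (hpow c k) (slice_proj c h) + hmult (hpow c k) (slice_perp c h)
                  + hmult U (hmult (slice_proj c h) c) + hmult V (hmult (slice_perp c h) c)"
      unfolding D_eq hmult_add_left hmult_assoc
      by (metis slice_proj_plus_perp hmult_add_right add.assoc)
    then show "?D' h = hmult U' (slice_proj c h) + hmult V' (slice_perp c h)"
      by (simp add: U'_def V'_def slice_proj_commute slice_perp_conj_commute
          hmult_add_left hmult_assoc algebra_simps)
  qed
  moreover have "himag_norm2 c = 0 \<longrightarrow> U' = V'"
    using UV by (simp add: U'_def V'_def hconj_eq_self)
  ultimately show ?case
    unfolding slice_shaped_def by auto
qed

lemma slice_shaped_monomial_derivative:
  "\<exists>D. ((\<lambda>x. hmult b (hpow x k)) has_derivative D) (at c) \<and> slice_shaped c D"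
proof -
  obtain D where D: "((\<lambda>x. hpow x k) has_derivative D) (at c)" and "slice_shaped c D"
    using slice_shaped_hpow_derivative by blast
  from \<open>slice_shaped c D\<close> have "slice_shaped c (\<lambda>h. hmult b (D h))"
    by (rule slice_shaped_mult_left)
  with bounded_linear.has_derivative[OF bounded_linear_hmult_left D] show ?thesis
    by blast
qed

lemma slice_shaped_left_poly_derivative:
  "\<exists>D. (left_poly_eval a n has_derivative D) (at c) \<and> slice_shaped c D"
proof (induction n)
  case 0
  have "left_poly_eval a 0 = (\<lambda>x. hmult (a 0) (hpow x 0))"
    by (simp add: left_poly_eval_def fun_eq_iff)
  with slice_shaped_monomial_derivative show ?case
    by metis
next
  case (Suc n)
  then obtain D where D: "(left_poly_eval a n has_derivative D) (at c)" "slice_shaped c D"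
    by blast
  obtain E where E: "((\<lambda>x. hmult (a (Suc n)) (hpow x (Suc n))) has_derivative E) (at c)"
    "slice_shaped c E"
    using slice_shaped_monomial_derivative by blast
  have "left_poly_eval a (Suc n) = (\<lambda>x. left_poly_eval a n x + hmult (a (Suc n)) (hpow x (Suc n)))"
    by (simp add: left_poly_eval_def fun_eq_iff)
  with has_derivative_add[OF D(1) E(1)] slice_shaped_add[OF D(2) E(2)] show ?case
    by auto
qed

lemma det_4:
  "det (A::'a::comm_ring_1^4^4) =
    A$1$1 * A$2$2 * A$3$3 * A$4$4
    - A$1$1 * A$2$2 * A$3$4 * A$4$3
    - A$1$1 * A$2$3 * A$3$2 * A$4$4
    + A$1$1 * A$2$3 * A$3$4 * A$4$2
    + A$1$1 * A$2$4 * A$3$2 * A$4$3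
    - A$1$1 * A$2$4 * A$3$3 * A$4$2
    - A$1$2 * A$2$1 * A$3$3 * A$4$4
    + A$1$2 * A$2$1 * A$3$4 * A$4$3
    + A$1$2 * A$2$3 * A$3$1 * A$4$4
    - A$1$2 * A$2$3 * A$3$4 * A$4$1
    - A$1$2 * A$2$4 * A$3$1 * A$4$3
    + A$1$2 * A$2$4 * A$3$3 * A$4$1
    + A$1$3 * A$2$1 * A$3$2 * A$4$4
    - A$1$3 * A$2$1 * A$3$4 * A$4$2
    - A$1$3 * A$2$2 * A$3$1 * A$4$4
    + A$1$3 * A$2$2 * A$3$4 * A$4$1
    + A$1$3 * A$2$4 * A$3$1 * A$4$2
    - A$1$3 * A$2$4 * A$3$2 * A$4$1
    - A$1$4 * A$2$1 * A$3$2 * A$4$3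
    + A$1$4 * A$2$1 * A$3$3 * A$4$2
    + A$1$4 * A$2$2 * A$3$1 * A$4$3
    - A$1$4 * A$2$2 * A$3$3 * A$4$1
    - A$1$4 * A$2$3 * A$3$1 * A$4$2
    + A$1$4 * A$2$3 * A$3$2 * A$4$1"
proof -
  have f1: "finite {2::4, 3, 4}" "1 \<notin> {2::4, 3, 4}" by auto
  have f2: "finite {3::4, 4}" "2 \<notin> {3::4, 4}" by auto
  have f3: "finite {4::4}" "3 \<notin> {4::4}" by auto
  show ?thesis
    unfolding det_def UNIV_4
    unfolding sum_over_permutations_insert[OF f1]
    unfolding sum_over_permutations_insert[OF f2]
    unfolding sum_over_permutations_insert[OF f3]
    unfolding permutes_sing
    by (simp add: sign_swap_id permutation_swap_id sign_compose permutation_compose sign_id swap_id_eq algebra_simps)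
qed

lemma det_slice_twist:
  assumes "himag_norm2 c > 0"
  shows "det (matrix (\<lambda>h. slice_proj c h + hmult C (slice_perp c h))) =
         (himag_norm2 c * C$1^2 + (C$2 * c$2 + C$3 * c$3 + C$4 * c$4)^2) / himag_norm2 c"
proof -
  define s where "s = himag_norm2 c"
  define X where "X = matrix (\<lambda>h. slice_proj c h + hmult C (slice_perp c h))"
  define w where "w = hmult C (himag c)"
  have s: "s > 0"
    using assms by (simp add: s_def)
  have col1: "X$1$1 = 1" "X$2$1 = 0" "X$3$1 = 0" "X$4$1 = 0"
    by (simp_all add: X_def matrix_def slice_proj_def slice_perp_def hmult_def axis_def)
  have entry: "s * X$i$j = c$i * c$j + s * hmult C (axis j 1) $ i - c$j * w$i"
    if "i \<noteq> 1" "j \<noteq> 1" for i j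
  proof -
    have "slice_proj c (axis j 1) = (c$j / s) *\<^sub>R himag c"
      using \<open>j \<noteq> 1\<close> exhaust_4[of j]
      by (auto simp: slice_proj_def axis_def himag_def vec_eq_iff forall_4 s_def)
    then have "X$i$j = c$j / s * c$i + hmult C (axis j 1) $ i - c$j / s * w$i"
      using \<open>i \<noteq> 1\<close> linear_scale[OF linear_hmult_left]
      by (simp add: X_def matrix_def slice_perp_def hmult_diff_right w_def himag_def)
    then have "s * X$i$j = s * (c$j / s * c$i + hmult C (axis j 1) $ i - c$j / s * w$i)"
      by simp
    also have "\<dots> = c$i * c$j + s * hmult C (axis j 1) $ i - c$j * w$i"
      using s by (simp add: field_simps)
    finally show ?thesis .
  qed
  have "s^3 * det X =
      (s * X$2$2) * (s * X$3$3) * (s * X$4$4) + (s * X$2$3) * (s * X$3$4) * (s * X$4$2)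
    + (s * X$2$4) * (s * X$3$2) * (s * X$4$3) - (s * X$2$2) * (s * X$3$4) * (s * X$4$3)
    - (s * X$2$3) * (s * X$3$2) * (s * X$4$4) - (s * X$2$4) * (s * X$3$3) * (s * X$4$2)"
    unfolding det_4 col1 by (simp add: algebra_simps power3_eq_cube)
  also have "\<dots> = s^2 * (s * C$1^2 + (C$2 * c$2 + C$3 * c$3 + C$4 * c$4)^2)"
    by (simp add: entry w_def hmult_def axis_def himag_def, unfold s_def himag_norm2_def, algebra)
  finally have "s * det X = s * C$1^2 + (C$2 * c$2 + C$3 * c$3 + C$4 * c$4)^2"
    using s by (simp add: power2_eq_square power3_eq_cube)
  with s show ?thesis
    by (simp add: X_def s_def field_simps)
qed

lemma jacobian_eq_matrix:
  assumes "(F has_derivative D) (at c)"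
  shows "jacobian F c = matrix D"
proof -
  have "partial_deriv F i j c = D (axis j 1) $ i" for i j
  proof -
    have "((\<lambda>t. c + t *\<^sub>R axis j 1) has_derivative (\<lambda>t. t *\<^sub>R axis j 1)) (at 0)"
      by (auto intro!: derivative_eq_intros)
    moreover have "(F has_derivative D) (at ((\<lambda>t. c + t *\<^sub>R axis j 1) 0))"
      using assms by simp
    ultimately have "((\<lambda>t. F (c + t *\<^sub>R axis j 1)) has_derivative (\<lambda>t. D (t *\<^sub>R axis j 1))) (at 0)"
      by (rule has_derivative_compose[unfolded o_def])
    then have "((\<lambda>t. F (c + t *\<^sub>R axis j 1) $ i) has_derivative (\<lambda>t. D (t *\<^sub>R axis j 1) $ i)) (at 0)"
      by (rule bounded_linear.has_derivative[OF bounded_linear_vec_nth])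
    moreover have "(\<lambda>t. D (t *\<^sub>R axis j 1) $ i) = (\<lambda>t. D (axis j 1) $ i * t)"
      using linear_scale[OF has_derivative_linear[OF assms]] by (simp add: fun_eq_iff)
    ultimately have "((\<lambda>t. F (c + t *\<^sub>R axis j 1) $ i) has_real_derivative D (axis j 1) $ i) (at 0)"
      by (simp add: has_field_derivative_def)
    then show ?thesis
      unfolding partial_deriv_def by (rule DERIV_imp_deriv)
  qed
  then show ?thesis
    unfolding jacobian_def matrix_def by simp
qed

lemma det_matrix_hmult: "det (matrix (hmult p)) = (p$1^2 + p$2^2 + p$3^2 + p$4^2)^2"
  unfolding det_4 by (simp add: matrix_def hmult_def axis_def, algebra)

lemma det_nonneg_if_slice_shaped:
  assumes "slice_shaped c D"
  shows "det (matrix D) \<ge> 0"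
proof -
  obtain U V where D: "D = (\<lambda>h. hmult U (slice_proj c h) + hmult V (slice_perp c h))"
    and UV: "himag_norm2 c = 0 \<longrightarrow> U = V"
    using assms unfolding slice_shaped_def by blast
  consider "himag_norm2 c = 0" | "himag_norm2 c > 0" "U = 0" | "himag_norm2 c > 0" "U \<noteq> 0"
    using himag_norm2_pos by blast
  then show ?thesis
  proof cases
    case 1
    then have "D = hmult U"
      using UV by (simp add: D fun_eq_iff hmult_add_right[symmetric] slice_proj_plus_perp)
    then show ?thesis
      by (simp add: det_matrix_hmult)
  next
    case 2
    have "slice_perp c (axis 1 1) = 0"
      by (simp add: slice_perp_def slice_proj_def axis_def vec_eq_iff forall_4)
    with 2 have "matrix D $ i $ 1 = 0" for i
      by (simp add: matrix_def D)
    then show ?thesis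
      by (simp add: det_4)
  next
    case 3
    then obtain U' where U': "hmult U U' = hone"
      using hmult_right_inverse by blast
    define X where "X = (\<lambda>h. slice_proj c h + hmult (hmult U' V) (slice_perp c h))"
    have "D = hmult U \<circ> X"
      by (simp add: D X_def fun_eq_iff hmult_add_right hmult_assoc[symmetric] U')
    moreover have "linear X"
      unfolding X_def
      by (intro linear_compose_add linear_slice_proj
          linear_compose[OF linear_slice_perp linear_hmult_left, unfolded o_def])
    ultimately have "det (matrix D) = det (matrix (hmult U)) * det (matrix X)"
      by (simp add: matrix_compose linear_hmult_left det_mul)
    moreover have "det (matrix X) \<ge> 0"
      unfolding X_def det_slice_twist[OF \<open>himag_norm2 c > 0\<close>] using 3 by simp
    ultimately show ?thesis
      by (simp add: det_matrix_hmult)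
  qed
qed

theorem mainTheorem9:
  fixes a :: "nat \<Rightarrow> real^4" and n :: nat and c :: "real^4"
  shows "det (jacobian (left_poly_eval a n) c) \<ge> 0"
proof -
  obtain D where "(left_poly_eval a n has_derivative D) (at c)" and "slice_shaped c D"
    using slice_shaped_left_poly_derivative by blast
  then show ?thesis
    using jacobian_eq_matrix det_nonneg_if_slice_shaped by metis
qed

end
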